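(* Let $\alpha>0$, $\rho>0$, and let $N\ge1$ be such that $\lambda_j:=(\pi j)^2-\alpha<\rho$ for $j=1,\dots,N$ and $\lambda_j\ge\rho$ for $j\ge N+1$. Let $\rho<\gamma_1<\gamma_2<\dots<\gamma_N$. Let $\phi_j(x)=\sin(\pi jx)$, let $B_0$ be the $N\times N$ matrix with entries $(B_0)_{ij}=\phi_i'(1)\phi_j'(1)$, let $\Lambda_{\gamma_k}=\mathrm{diag}\big(\frac{1}{\gamma_k-\lambda_i}\big)_{1\le i\le N}$ and $B_k=\Lambda_{\gamma_k}B_0\Lambda_{\gamma_k}$ for $k=1,\dots,N$. Then the matrix $B_1+B_2+\dots+B_N$ is invertible. *)

theory Defs
  imports "HOL-Analysis.Analysis" "Jordan_Normal_Form.Matrix"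
begin

definition lam :: "real \<Rightarrow> nat \<Rightarrow> real" where
  "lam \<alpha> j = (pi * real j)^2 - \<alpha>"

definition phi :: "nat \<Rightarrow> real \<Rightarrow> real" where
  "phi j x = sin (pi * real j * x)"

(* N x N matrices, 0-based JNF indices: row/column i corresponds to index i+1 *)
definition B0 :: "nat \<Rightarrow> real mat" where
  "B0 N = mat N N (\<lambda>(i, j). deriv (phi (i+1)) 1 * deriv (phi (j+1)) 1)"

definition Lam :: "real \<Rightarrow> nat \<Rightarrow> real \<Rightarrow> real mat" where
  "Lam \<alpha> N g = mat N N (\<lambda>(i, j). if i = j then 1 / (g - lam \<alpha> (i+1)) else 0)"

definition Bk :: "real \<Rightarrow> nat \<Rightarrow> (nat \<Rightarrow> real) \<Rightarrow> nat \<Rightarrow> real mat" where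
  "Bk \<alpha> N \<gamma> k = Lam \<alpha> N (\<gamma> k) * B0 N * Lam \<alpha> N (\<gamma> k)"

definition Bsum :: "real \<Rightarrow> nat \<Rightarrow> (nat \<Rightarrow> real) \<Rightarrow> real mat" where
  "Bsum \<alpha> N \<gamma> = foldr (\<lambda>k A. Bk \<alpha> N \<gamma> k + A) [1..<N+1] (0\<^sub>m N N)"

end

theory Submission
  imports Defs "Jordan_Normal_Form.Determinant" "HOL-Computational_Algebra.Polynomial"
begin

text \<open>Write \<open>B\<^sub>k = u\<^sub>k u\<^sub>k\<^sup>T\<close> with \<open>(u\<^sub>k)\<^sub>i = \<phi>\<^sub>i'(1) / (\<gamma>\<^sub>k - \<lambda>\<^sub>i)\<close>. Then \<open>B\<^sub>1 + \<dots> + B\<^sub>N\<close> is a Gram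
  matrix and \<open>v\<^sup>T (\<Sum>B\<^sub>k) v = \<Sum>\<^sub>k \<langle>u\<^sub>k, v\<rangle>\<^sup>2\<close>, so a kernel vector \<open>v\<close> is orthogonal to every \<open>u\<^sub>k\<close>:
  the rational function \<open>\<Sum>\<^sub>i \<phi>\<^sub>i'(1) v\<^sub>i / (z - \<lambda>\<^sub>i)\<close> vanishes at the \<open>N\<close> distinct points
  \<open>\<gamma>\<^sub>k > \<rho> > \<lambda>\<^sub>i\<close>. Clearing denominators gives a polynomial of degree \<open>< N\<close> with \<open>N\<close> roots,
  hence zero, and evaluating it at \<open>\<lambda>\<^sub>i\<close> leaves \<open>\<phi>\<^sub>i'(1) v\<^sub>i = 0\<close>. Since
  \<open>\<phi>\<^sub>i'(1) = (-1)\<^sup>i \<pi> i \<noteq> 0\<close>, \<open>v = 0\<close>.\<close>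

lemma sum_prod_others_at_node:
  fixes a y :: "nat \<Rightarrow> 'a::comm_ring_1"
  assumes "i < n"
  shows "(\<Sum>k<n. y k * (\<Prod>j\<in>{..<n}-{k}. a i - a j)) = y i * (\<Prod>j\<in>{..<n}-{i}. a i - a j)"
proof -
  have "(\<Prod>j\<in>{..<n}-{k}. a i - a j) = 0" if "k \<in> {..<n} - {i}" for k
    using that assms by (intro prod_zero) auto
  then show ?thesis
    using assms by (simp add: sum.remove[of "{..<n}" i])
qed

lemma prod_mult_partial_fraction:
  fixes a y :: "nat \<Rightarrow> 'a::field"
  assumes "\<And>i. i < n \<Longrightarrow> g \<noteq> a i"
  shows "(\<Prod>j<n. g - a j) * (\<Sum>i<n. y i / (g - a i)) = (\<Sum>i<n. y i * (\<Prod>j\<in>{..<n}-{i}. g - a j))"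
  unfolding sum_distrib_left
proof (rule sum.cong)
  fix i assume i: "i \<in> {..<n}"
  then have "(\<Prod>j<n. g - a j) = (g - a i) * (\<Prod>j\<in>{..<n}-{i}. g - a j)"
    by (simp add: prod.remove)
  with assms i show "(\<Prod>j<n. g - a j) * (y i / (g - a i)) = y i * (\<Prod>j\<in>{..<n}-{i}. g - a j)"
    by simp
qed simp

lemma partial_fraction_coeff_eq_0:
  fixes a y :: "nat \<Rightarrow> 'a::field" and G :: "'a set"
  assumes inj: "inj_on a {..<n}" and "finite G" and card_G: "card G = n"
    and poles: "\<And>g i. g \<in> G \<Longrightarrow> i < n \<Longrightarrow> g \<noteq> a i"
    and vanish: "\<And>g. g \<in> G \<Longrightarrow> (\<Sum>i<n. y i / (g - a i)) = 0"
    and "i < n"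
  shows "y i = 0"
proof -
  \<comment> \<open>\<open>P(x) = (\<Prod>\<^sub>j (x - a\<^sub>j)) \<cdot> \<Sum>\<^sub>i y\<^sub>i / (x - a\<^sub>i)\<close> away from the poles\<close>
  define P where "P = (\<Sum>k<n. Polynomial.smult (y k) (\<Prod>j\<in>{..<n}-{k}. [:- a j, 1:]))"
  have poly_P: "poly P x = (\<Sum>k<n. y k * (\<Prod>j\<in>{..<n}-{k}. x - a j))" for x
    unfolding P_def by (simp add: poly_sum poly_prod)
  have "degree P \<le> n - 1"
    unfolding P_def
  proof (intro degree_sum_le)
    fix k assume "k \<in> {..<n}"
    have "degree (Polynomial.smult (y k) (\<Prod>j\<in>{..<n}-{k}. [:- a j, 1:]))
        \<le> degree (\<Prod>j\<in>{..<n}-{k}. [:- a j, 1:])"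
      by (rule degree_smult_le)
    also have "\<dots> \<le> sum (degree \<circ> (\<lambda>j. [:- a j, 1:])) ({..<n}-{k})"
      by (rule degree_prod_sum_le) simp
    also have "\<dots> = n - 1"
      using \<open>k \<in> {..<n}\<close> by simp
    finally show "degree (Polynomial.smult (y k) (\<Prod>j\<in>{..<n}-{k}. [:- a j, 1:])) \<le> n - 1" .
  qed simp
  moreover have "poly P g = 0" if "g \<in> G" for g
    using prod_mult_partial_fraction[of n g a y] poles[OF that] vanish[OF that] poly_P by simp
  ultimately have "P = 0"
    using \<open>i < n\<close> card_G by (intro poly_eqI_degree[of G]) auto
  then have "y i * (\<Prod>j\<in>{..<n}-{i}. a i - a j) = 0"
    using poly_P[of "a i"] sum_prod_others_at_node[where a = a and y = y, OF \<open>i < n\<close>] by simp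
  moreover have "(\<Prod>j\<in>{..<n}-{i}. a i - a j) \<noteq> 0"
    using inj \<open>i < n\<close> by (auto simp: inj_on_def)
  ultimately show ?thesis by simp
qed

lemma sum_quadratic_form_outer:
  fixes u :: "'k \<Rightarrow> nat \<Rightarrow> 'a::comm_ring_1"
  shows "(\<Sum>i<n. v i * (\<Sum>j<n. (\<Sum>k\<in>K. u k i * u k j) * v j)) = (\<Sum>k\<in>K. (\<Sum>i<n. u k i * v i)^2)"
proof -
  have "(\<Sum>i<n. v i * (\<Sum>j<n. (\<Sum>k\<in>K. u k i * u k j) * v j))
      = (\<Sum>i<n. \<Sum>j<n. \<Sum>k\<in>K. (u k i * v i) * (u k j * v j))"
    by (simp add: sum_distrib_left sum_distrib_right algebra_simps)
  also have "\<dots> = (\<Sum>k\<in>K. \<Sum>i<n. \<Sum>j<n. (u k i * v i) * (u k j * v j))"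
    by (simp add: sum.swap[of _ K])
  also have "\<dots> = (\<Sum>k\<in>K. (\<Sum>i<n. u k i * v i)^2)"
    by (simp add: power2_eq_square sum_product)
  finally show ?thesis .
qed

lemma gram_mat_mult_vec_eq_0_imp_orthogonal:
  fixes u :: "'k \<Rightarrow> nat \<Rightarrow> 'a::linordered_idom"
  assumes "finite K" and v: "v \<in> carrier_vec n"
    and kernel: "mat n n (\<lambda>(i, j). \<Sum>k\<in>K. u k i * u k j) *\<^sub>v v = 0\<^sub>v n"
    and "k \<in> K"
  shows "(\<Sum>i<n. u k i * v $ i) = 0"
proof -
  have "(\<Sum>j<n. (\<Sum>k\<in>K. u k i * u k j) * v $ j) = 0" if "i < n" for i
    using arg_cong[OF kernel, of "\<lambda>w. w $ i"] that v
    by (simp add: scalar_prod_def lessThan_atLeast0)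
  then have "(\<Sum>k\<in>K. (\<Sum>i<n. u k i * v $ i)^2) = 0"
    by (simp flip: sum_quadratic_form_outer)
  with \<open>finite K\<close> \<open>k \<in> K\<close> show ?thesis
    by (simp add: sum_nonneg_eq_0_iff)
qed

lemma invertible_mat_if_det_nonzero:
  fixes A :: "'a::field mat"
  assumes A: "A \<in> carrier_mat n n" and "det A \<noteq> 0"
  shows "invertible_mat A"
proof -
  obtain B where "B \<in> carrier_mat n n" "B * A = 1\<^sub>m n" "A * B = 1\<^sub>m n"
    using det_non_zero_imp_unit[OF assms, of "()"] unfolding Units_def ring_mat_def by auto
  with A show ?thesis
    unfolding invertible_mat_def inverts_mat_def by auto
qed

lemma strict_mono_on_atLeastAtMost_if_Suc:
  fixes f :: "nat \<Rightarrow> 'a::order"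
  assumes step: "\<And>k. a \<le> k \<Longrightarrow> k < b \<Longrightarrow> f k < f (Suc k)"
  shows "strict_mono_on {a..b} f"
proof (rule strict_mono_onI)
  fix r s assume "r \<in> {a..b}" "s \<in> {a..b}" "r < s"
  then have "Suc r \<le> s" "a \<le> r" "s \<le> b" by auto
  then show "f r < f s"
    by (induction s rule: dec_induct) (auto intro: step less_trans[OF _ step])
qed

lemma deriv_phi_1: "deriv (phi j) 1 = (-1) ^ j * (pi * real j)"
proof -
  have "(phi j has_real_derivative cos (pi * real j * 1) * (pi * real j)) (at 1)"
    unfolding phi_def[abs_def] by (auto intro!: derivative_eq_intros)
  then show ?thesis
    using cos_npi[of j] by (simp add: DERIV_imp_deriv mult.commute)
qed

lemma inj_lam: "inj (lam \<alpha>)"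
  by (auto intro!: injI simp: lam_def)

lemma Lam_mult:
  assumes "M \<in> carrier_mat N N"
  shows "Lam \<alpha> N g * M = mat N N (\<lambda>(i, j). M $$ (i, j) / (g - lam \<alpha> (i+1)))"
  using assms by (auto intro!: eq_matI simp: Lam_def scalar_prod_def if_distrib if_distribR cong: if_cong)

lemma mult_Lam:
  assumes "M \<in> carrier_mat N N"
  shows "M * Lam \<alpha> N g = mat N N (\<lambda>(i, j). M $$ (i, j) / (g - lam \<alpha> (j+1)))"
  using assms by (auto intro!: eq_matI simp: Lam_def scalar_prod_def if_distrib if_distribR cong: if_cong)

definition Bk_factor :: "real \<Rightarrow> (nat \<Rightarrow> real) \<Rightarrow> nat \<Rightarrow> nat \<Rightarrow> real" where
  "Bk_factor \<alpha> \<gamma> k i = deriv (phi (i+1)) 1 / (\<gamma> k - lam \<alpha> (i+1))"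

lemma Bk_eq_outer: "Bk \<alpha> N \<gamma> k = mat N N (\<lambda>(i, j). Bk_factor \<alpha> \<gamma> k i * Bk_factor \<alpha> \<gamma> k j)"
proof -
  have B0: "B0 N \<in> carrier_mat N N" by (simp add: B0_def)
  then have LB0: "Lam \<alpha> N (\<gamma> k) * B0 N \<in> carrier_mat N N"
    unfolding Lam_def by (rule mult_carrier_mat[OF mat_carrier])
  then show ?thesis
    unfolding Bk_def mult_Lam[OF LB0] unfolding Lam_mult[OF B0]
    by (auto intro!: eq_matI simp: B0_def Bk_factor_def)
qed

lemma Bsum_eq_gram: "Bsum \<alpha> N \<gamma> = mat N N (\<lambda>(i, j). \<Sum>k\<in>{1..N}. Bk_factor \<alpha> \<gamma> k i * Bk_factor \<alpha> \<gamma> k j)"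
proof -
  have "foldr (\<lambda>k A. Bk \<alpha> N \<gamma> k + A) ks (0\<^sub>m N N)
      = mat N N (\<lambda>(i, j). \<Sum>k\<leftarrow>ks. Bk_factor \<alpha> \<gamma> k i * Bk_factor \<alpha> \<gamma> k j)" for ks
    by (induction ks) (auto simp: Bk_eq_outer)
  moreover have "sum_list (map f [1..<N+1]) = (\<Sum>k\<in>{1..N}. f k)" for f :: "nat \<Rightarrow> real"
    by (metis sum_set_upt_conv_sum_list_nat set_upt Suc_eq_plus1 atLeastLessThanSuc_atLeastAtMost)
  ultimately show ?thesis
    unfolding Bsum_def by simp
qed

lemma Bsum_mult_vec_eq_0_imp_eq_0:
  assumes inj_\<gamma>: "inj_on \<gamma> {1..N}"
    and nodes: "\<And>k j. k \<in> {1..N} \<Longrightarrow> 1 \<le> j \<Longrightarrow> j \<le> N \<Longrightarrow> \<gamma> k \<noteq> lam \<alpha> j"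
    and v: "v \<in> carrier_vec N" and kernel: "Bsum \<alpha> N \<gamma> *\<^sub>v v = 0\<^sub>v N"
  shows "v = 0\<^sub>v N"
proof (rule eq_vecI)
  fix i assume "i < dim_vec (0\<^sub>v N :: real vec)"
  then have "i < N" by simp
  have orth: "(\<Sum>i<N. Bk_factor \<alpha> \<gamma> k i * v $ i) = 0" if "k \<in> {1..N}" for k
    using gram_mat_mult_vec_eq_0_imp_orthogonal[OF _ v kernel[unfolded Bsum_eq_gram] that] by simp
  have "deriv (phi (i+1)) 1 * v $ i = 0"
  proof (rule partial_fraction_coeff_eq_0[where a = "\<lambda>i. lam \<alpha> (i+1)" and G = "\<gamma> ` {1..N}"])
    show "inj_on (\<lambda>i. lam \<alpha> (i+1)) {..<N}"
      by (auto simp: inj_on_def dest: injD[OF inj_lam])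
    show "card (\<gamma> ` {1..N}) = N"
      using inj_\<gamma> by (simp add: card_image)
    show "g \<noteq> lam \<alpha> (j+1)" if "g \<in> \<gamma> ` {1..N}" "j < N" for g j
      using that nodes by auto
    show "(\<Sum>j<N. deriv (phi (j+1)) 1 * v $ j / (g - lam \<alpha> (j+1))) = 0" if "g \<in> \<gamma> ` {1..N}" for g
      using that orth by (auto simp: Bk_factor_def)
  qed (simp_all add: \<open>i < N\<close>)
  then show "v $ i = 0\<^sub>v N $ i"
    using \<open>i < N\<close> by (simp add: deriv_phi_1)
qed (use v in simp)

theorem lemma5p2:
  fixes \<alpha> \<rho> :: real and N :: nat and \<gamma> :: "nat \<Rightarrow> real"
  assumes "\<alpha> > 0" and "\<rho> > 0" and "N \<ge> 1"
    and "\<And>j. 1 \<le> j \<Longrightarrow> j \<le> N \<Longrightarrow> lam \<alpha> j < \<rho>"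
    and "\<And>j. j \<ge> N + 1 \<Longrightarrow> lam \<alpha> j \<ge> \<rho>"
    and "\<rho> < \<gamma> 1"
    and "\<And>k. 1 \<le> k \<Longrightarrow> k < N \<Longrightarrow> \<gamma> k < \<gamma> (k + 1)"
  shows "invertible_mat (Bsum \<alpha> N \<gamma>)"
proof -
  have mono: "strict_mono_on {1..N} \<gamma>"
    using assms(7) by (intro strict_mono_on_atLeastAtMost_if_Suc) simp
  have nodes: "\<gamma> k \<noteq> lam \<alpha> j" if "k \<in> {1..N}" "1 \<le> j" "j \<le> N" for k j
  proof -
    have "lam \<alpha> j < \<rho>" using assms(4) that(2,3) .
    also have "\<rho> < \<gamma> 1" by fact
    also have "\<gamma> 1 \<le> \<gamma> k" using strict_mono_on_leD[OF mono] that(1) by auto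
    finally show ?thesis by simp
  qed
  have carrier: "Bsum \<alpha> N \<gamma> \<in> carrier_mat N N" by (simp add: Bsum_eq_gram)
  have "det (Bsum \<alpha> N \<gamma>) \<noteq> 0"
    using Bsum_mult_vec_eq_0_imp_eq_0[OF strict_mono_on_imp_inj_on[OF mono] nodes]
    by (auto simp: det_0_iff_vec_prod_zero[OF carrier])
  with carrier show ?thesis by (rule invertible_mat_if_det_nonzero)
qed

end
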